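(* Let $n\ge 2$, let $\mathcal{S}\subseteq(\mathbb{C}^d)^{\otimes n}$ be the permutation-symmetric subspace, let $|\psi\rangle\in\mathcal{S}$ and let $X$ be a $d\times d$ complex matrix with $X_{(1)}|\psi\rangle\in\mathcal{S}$. Then for all nonnegative integers $p_1,\ldots,p_n$ with $p_1+\cdots+p_n=p$, $$X^p_{(1)}|\psi\rangle=X^{p_1}\otimes X^{p_2}\otimes\cdots\otimes X^{p_n}|\psi\rangle.$$ If $X$ is invertible, the same holds for all integers $p_1,\ldots,p_n$ (possibly negative) with $p_1+\cdots+p_n=p$.
   Context: $\mathcal{S}$ is the set of vectors in $(\mathbb{C}^d)^{\otimes n}$ invariant under all permutations of the $n$ tensor factors. $X^p_{(1)}$ denotes $X^p\otimes\mathbb{I}\otimes\cdots\otimes\mathbb{I}$ on $(\mathbb{C}^d)^{\otimes n}$. *)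

theory Defs
  imports "HOL-Combinatorics.Permutations" "Jordan_Normal_Form.Matrix"
begin

text \<open>Vectors of (C^d)^{tensor n} are represented as complex-valued functions on
  index lists (i_1,...,i_n) with each i_k < d; only values on idx d n matter.\<close>

definition idx :: "nat \<Rightarrow> nat \<Rightarrow> nat list set" where
  "idx d n = {is. length is = n \<and> set is \<subseteq> {..<d}}"

definition tensor_apply ::
  "nat \<Rightarrow> nat \<Rightarrow> (nat \<Rightarrow> complex mat) \<Rightarrow> (nat list \<Rightarrow> complex) \<Rightarrow> nat list \<Rightarrow> complex" where
  "tensor_apply d n A \<psi> is = (\<Sum>js\<in>idx d n. (\<Prod>k<n. A k $$ (is ! k, js ! k)) * \<psi> js)"

definition perm_symmetric :: "nat \<Rightarrow> nat \<Rightarrow> (nat list \<Rightarrow> complex) \<Rightarrow> bool" where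
  "perm_symmetric d n \<psi> \<longleftrightarrow>
     (\<forall>\<sigma>. \<sigma> permutes {..<n} \<longrightarrow>
        (\<forall>is\<in>idx d n. \<psi> (map (\<lambda>k. is ! \<sigma> k) [0..<n]) = \<psi> is))"

definition first_site :: "nat \<Rightarrow> complex mat \<Rightarrow> nat \<Rightarrow> complex mat" where
  "first_site d Y = (\<lambda>k. if k = 0 then Y else 1\<^sub>m d)"

definition mat_inv :: "nat \<Rightarrow> complex mat \<Rightarrow> complex mat" where
  "mat_inv d X = (SOME B. B \<in> carrier_mat d d \<and> inverts_mat X B \<and> inverts_mat B X)"

definition mat_powi :: "nat \<Rightarrow> complex mat \<Rightarrow> int \<Rightarrow> complex mat" where
  "mat_powi d X k = (if 0 \<le> k then X ^\<^sub>m nat k else mat_inv d X ^\<^sub>m nat (- k))"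

end

theory Submission
  imports Defs
begin

text \<open>Write Y_(i) for Y acting on the i-th tensor factor only. Conjugating by the
  transposition of the first and the i-th factor, symmetry of psi and of X_(1) psi gives
  X_(i) psi = X_(1) psi for every i. Since operators on different factors commute, a single
  factor X can thus be moved from any factor of X^p1 \<otimes> ... \<otimes> X^pn psi to the first one,
  so the vector depends only on p1 + ... + pn. For integer exponents, apply X^M \<otimes> ... \<otimes> X^M
  with M large to both sides: all exponents become nonnegative, and this operator is
  invertible.\<close>

lemma idx_Suc: "idx d (Suc n) = (\<lambda>(j, js). j # js) ` ({..<d} \<times> idx d n)"
  unfolding idx_def by (auto simp: image_iff length_Suc_conv)

lemma finite_idx: "finite (idx d n)"
  by (induction n) (auto simp: idx_Suc, simp add: idx_def)

lemma length_idx: "ix \<in> idx d n \<Longrightarrow> length ix = n"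
  unfolding idx_def by simp

lemma nth_idx_less: "ix \<in> idx d n \<Longrightarrow> k < n \<Longrightarrow> ix ! k < d"
  unfolding idx_def by (auto dest!: nth_mem)

lemma sum_idx_prod:
  fixes f :: "nat \<Rightarrow> nat \<Rightarrow> 'a :: comm_semiring_1"
  shows "(\<Sum>js\<in>idx d n. \<Prod>k<n. f k (js ! k)) = (\<Prod>k<n. \<Sum>j<d. f k j)"
proof (induction n arbitrary: f)
  case 0
  have "idx d 0 = {[]}" by (auto simp: idx_def)
  then show ?case by simp
next
  case (Suc n)
  have inj: "inj_on (\<lambda>(j, js). j # js) ({..<d} \<times> idx d n)" by (auto simp: inj_on_def)
  have "(\<Sum>js\<in>idx d (Suc n). \<Prod>k<Suc n. f k (js ! k))
      = (\<Sum>(j, js)\<in>{..<d} \<times> idx d n. f 0 j * (\<Prod>k<n. f (Suc k) (js ! k)))"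
    unfolding idx_Suc sum.reindex[OF inj]
    by (simp only: comp_def case_prod_unfold prod.lessThan_Suc_shift nth_Cons_0 nth_Cons_Suc)
  also have "\<dots> = (\<Sum>j<d. f 0 j * (\<Sum>js\<in>idx d n. \<Prod>k<n. f (Suc k) (js ! k)))"
    by (simp add: sum.cartesian_product[symmetric] sum_distrib_left)
  also have "\<dots> = (\<Prod>k<Suc n. \<Sum>j<d. f k j)"
    by (simp only: Suc[of "\<lambda>k. f (Suc k)"] sum_distrib_right[symmetric] prod.lessThan_Suc_shift)
  finally show ?case .
qed

lemma tensor_apply_cong:
  assumes "\<And>k. k < n \<Longrightarrow> A k = B k" and "\<And>js. js \<in> idx d n \<Longrightarrow> \<phi> js = \<psi> js"
  shows "tensor_apply d n A \<phi> ix = tensor_apply d n B \<psi> ix"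
  unfolding tensor_apply_def using assms by (intro sum.cong prod.cong refl) auto

lemma tensor_apply_mult:
  assumes A: "\<And>k. k < n \<Longrightarrow> A k \<in> carrier_mat d d"
    and B: "\<And>k. k < n \<Longrightarrow> B k \<in> carrier_mat d d"
    and ix: "ix \<in> idx d n"
  shows "tensor_apply d n A (tensor_apply d n B \<psi>) ix = tensor_apply d n (\<lambda>k. A k * B k) \<psi> ix"
proof -
  have entry: "(\<Sum>js\<in>idx d n. \<Prod>k<n. A k $$ (ix ! k, js ! k) * B k $$ (js ! k, ls ! k))
      = (\<Prod>k<n. (A k * B k) $$ (ix ! k, ls ! k))" if ls: "ls \<in> idx d n" for ls
    unfolding sum_idx_prod[of "\<lambda>k j. A k $$ (ix ! k, j) * B k $$ (j, ls ! k)"]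
  proof (intro prod.cong refl)
    fix k assume "k \<in> {..<n}"
    then have k: "k < n" by simp
    show "(\<Sum>j<d. A k $$ (ix ! k, j) * B k $$ (j, ls ! k)) = (A k * B k) $$ (ix ! k, ls ! k)"
      using A[OF k] B[OF k] nth_idx_less[OF ix k] nth_idx_less[OF ls k]
      by (simp add: scalar_prod_def atLeast0LessThan)
  qed
  have "tensor_apply d n A (tensor_apply d n B \<psi>) ix
      = (\<Sum>ls\<in>idx d n. (\<Sum>js\<in>idx d n. \<Prod>k<n. A k $$ (ix ! k, js ! k) * B k $$ (js ! k, ls ! k)) * \<psi> ls)"
    unfolding tensor_apply_def sum_distrib_left sum_distrib_right
    by (subst sum.swap) (simp add: prod.distrib mult.assoc)
  also have "\<dots> = tensor_apply d n (\<lambda>k. A k * B k) \<psi> ix"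
    unfolding tensor_apply_def by (simp add: entry)
  finally show ?thesis .
qed

lemma tensor_apply_one:
  assumes ix: "ix \<in> idx d n"
  shows "tensor_apply d n (\<lambda>k. 1\<^sub>m d) \<psi> ix = \<psi> ix"
proof -
  have delta: "(\<Prod>k<n. (1\<^sub>m d :: complex mat) $$ (ix ! k, js ! k)) = (if ix = js then 1 else 0)"
    if js: "js \<in> idx d n" for js
  proof -
    have "(\<Prod>k<n. 1\<^sub>m d $$ (ix ! k, js ! k)) = (\<Prod>k<n. if ix ! k = js ! k then 1 else 0 :: complex)"
      using nth_idx_less[OF ix] nth_idx_less[OF js] by (intro prod.cong) auto
    also have "\<dots> = (if ix = js then 1 else 0)"
    proof (cases "ix = js")
      case False
      then obtain k where "k < n" "ix ! k \<noteq> js ! k"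
        using length_idx[OF ix] length_idx[OF js] nth_equalityI by metis
      then show ?thesis by (auto intro: prod_zero)
    qed simp
    finally show ?thesis .
  qed
  have "tensor_apply d n (\<lambda>k. 1\<^sub>m d) \<psi> ix = (\<Sum>js\<in>idx d n. if ix = js then \<psi> js else 0)"
    unfolding tensor_apply_def by (rule sum.cong) (simp_all add: delta)
  also have "\<dots> = \<psi> ix"
    using ix finite_idx by (simp add: sum.delta)
  finally show ?thesis .
qed

definition site :: "nat \<Rightarrow> nat \<Rightarrow> complex mat \<Rightarrow> nat \<Rightarrow> complex mat" where
  "site d i Y = (\<lambda>k. if k = i then Y else 1\<^sub>m d)"

lemma site_carrier_mat [simp]: "Y \<in> carrier_mat d d \<Longrightarrow> site d i Y k \<in> carrier_mat d d"
  unfolding site_def by simp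

lemma first_site_eq_site: "first_site d Y = site d 0 Y"
  unfolding first_site_def site_def by simp

definition permute_idx :: "(nat \<Rightarrow> nat) \<Rightarrow> nat \<Rightarrow> nat list \<Rightarrow> nat list" where
  "permute_idx \<sigma> n ix = map (\<lambda>k. ix ! \<sigma> k) [0..<n]"

lemma transpose_less:
  "i < n \<Longrightarrow> j < n \<Longrightarrow> k < n \<Longrightarrow> Transposition.transpose i j k < n"
  by (simp add: transpose_def)

lemma permute_idx_transpose_in_idx:
  "i < n \<Longrightarrow> j < n \<Longrightarrow> ix \<in> idx d n \<Longrightarrow> permute_idx (Transposition.transpose i j) n ix \<in> idx d n"
  using nth_idx_less[OF _ transpose_less] by (auto simp: permute_idx_def idx_def)

lemma permute_idx_transpose_involution:
  assumes "i < n" "j < n" "ix \<in> idx d n"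
  shows "permute_idx (Transposition.transpose i j) n (permute_idx (Transposition.transpose i j) n ix) = ix"
  using assms transpose_less[OF assms(1,2)]
  by (intro nth_equalityI) (auto simp: permute_idx_def length_idx)

lemma tensor_apply_permute_idx:
  assumes i: "i < n" and j: "j < n" and ix: "ix \<in> idx d n"
  defines "\<tau> \<equiv> Transposition.transpose i j"
  shows "tensor_apply d n A \<psi> (permute_idx \<tau> n ix)
       = tensor_apply d n (A \<circ> \<tau>) (\<psi> \<circ> permute_idx \<tau> n) ix"
proof -
  let ?p = "permute_idx \<tau> n"
  have "(\<Prod>k<n. A k $$ (?p ix ! k, ?p ls ! k)) = (\<Prod>k<n. A (\<tau> k) $$ (ix ! k, ls ! k))" for ls
  proof -
    have "(\<Prod>k<n. A k $$ (?p ix ! k, ?p ls ! k)) = (\<Prod>k<n. A k $$ (ix ! \<tau> k, ls ! \<tau> k))"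
      by (intro prod.cong) (auto simp: permute_idx_def)
    also have "\<dots> = (\<Prod>k<n. A (\<tau> k) $$ (ix ! k, ls ! k))"
      by (rule prod.reindex_bij_witness[of _ \<tau> \<tau>]) (auto simp: \<tau>_def transpose_less[OF i j])
    finally show ?thesis .
  qed
  then have "(\<Sum>ls\<in>idx d n. (\<Prod>k<n. A (\<tau> k) $$ (ix ! k, ls ! k)) * \<psi> (?p ls))
      = (\<Sum>js\<in>idx d n. (\<Prod>k<n. A k $$ (?p ix ! k, js ! k)) * \<psi> js)"
    using permute_idx_transpose_involution[OF i j] permute_idx_transpose_in_idx[OF i j]
    by (intro sum.reindex_bij_witness[of _ ?p ?p]) (auto simp: \<tau>_def)
  then show ?thesis unfolding tensor_apply_def by simp
qed

definition site_independent :: "nat \<Rightarrow> nat \<Rightarrow> complex mat \<Rightarrow> (nat list \<Rightarrow> complex) \<Rightarrow> bool" where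
  "site_independent d n Y \<psi> \<longleftrightarrow>
     (\<forall>i<n. \<forall>ix\<in>idx d n. tensor_apply d n (site d i Y) \<psi> ix = tensor_apply d n (site d 0 Y) \<psi> ix)"

lemma perm_symmetric_imp_site_independent:
  assumes sym: "perm_symmetric d n \<psi>"
    and sym_Y: "perm_symmetric d n (tensor_apply d n (site d 0 Y) \<psi>)"
  shows "site_independent d n Y \<psi>"
  unfolding site_independent_def
proof (intro allI impI ballI)
  fix i ix assume i: "i < n" and ix: "ix \<in> idx d n"
  let ?\<tau> = "Transposition.transpose 0 i"
  have n: "0 < n" using i by simp
  have perm: "?\<tau> permutes {..<n}" using i by (intro permutes_swap_id) auto
  have "tensor_apply d n (site d 0 Y) \<psi> ix = tensor_apply d n (site d 0 Y) \<psi> (permute_idx ?\<tau> n ix)"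
    using sym_Y perm ix unfolding perm_symmetric_def permute_idx_def by auto
  also have "\<dots> = tensor_apply d n (site d 0 Y \<circ> ?\<tau>) (\<psi> \<circ> permute_idx ?\<tau> n) ix"
    by (rule tensor_apply_permute_idx[OF n i ix])
  also have "\<dots> = tensor_apply d n (site d i Y) \<psi> ix"
    using sym perm unfolding perm_symmetric_def permute_idx_def
    by (intro tensor_apply_cong) (auto simp: site_def transpose_def)
  finally show "tensor_apply d n (site d i Y) \<psi> ix = tensor_apply d n (site d 0 Y) \<psi> ix" by simp
qed

lemma pow_mat_add:
  fixes X :: "'a :: semiring_1 mat"
  assumes X: "X \<in> carrier_mat d d"
  shows "X ^\<^sub>m (a + b) = X ^\<^sub>m a * X ^\<^sub>m b"
proof -
  let ?R = "ring_mat TYPE('a) d ()"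
  interpret R: semiring ?R by (rule semiring_mat)
  have "X [^]\<^bsub>?R\<^esub> a \<otimes>\<^bsub>?R\<^esub> X [^]\<^bsub>?R\<^esub> b = X [^]\<^bsub>?R\<^esub> (a + b)"
    using X by (intro R.nat_pow_mult) (simp add: ring_mat_simps)
  then show ?thesis
    by (simp add: pow_mat_ring_pow[OF X, where b = "()"] ring_mat_simps)
qed

lemma pow_mat_Suc_left:
  fixes X :: "'a :: semiring_1 mat"
  assumes X: "X \<in> carrier_mat d d"
  shows "X ^\<^sub>m Suc m = X * X ^\<^sub>m m"
  using pow_mat_add[OF X, of 1 m] X by simp

lemma tensor_apply_pow_eq_first_site:
  assumes X: "X \<in> carrier_mat d d"
    and indep: "site_independent d n X \<psi>"
    and ix: "ix \<in> idx d n"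
  shows "tensor_apply d n (\<lambda>k. X ^\<^sub>m a k) \<psi> ix = tensor_apply d n (site d 0 (X ^\<^sub>m (\<Sum>k<n. a k))) \<psi> ix"
  using ix
proof (induction "\<Sum>k<n. a k" arbitrary: a ix)
  case 0
  then have "k < n \<Longrightarrow> a k = 0" for k by simp
  with X show ?case by (intro tensor_apply_cong) (auto simp: site_def)
next
  case (Suc s)
  then obtain i m where i: "i < n" and ai: "a i = Suc m"
    by (metis lessThan_iff not0_implies_Suc sum.neutral nat.distinct(1))
  define b where "b = a(i := m)"
  have sum_b: "s = (\<Sum>k<n. b k)"
    using Suc.hyps(2) i ai sum.remove[of "{..<n}" i a] sum.remove[of "{..<n}" i b]
    by (simp add: b_def)
  note pow_one = right_mult_one_mat[OF pow_carrier_mat[OF X]] left_mult_one_mat[OF pow_carrier_mat[OF X]]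
  have mult: "tensor_apply d n A (tensor_apply d n B \<psi>) ix = tensor_apply d n (\<lambda>k. A k * B k) \<psi> ix"
    if "\<And>k. A k \<in> carrier_mat d d" "\<And>k. B k \<in> carrier_mat d d" for A B
    using tensor_apply_mult[OF _ _ Suc.prems] that by blast
  \<comment> \<open>move the \<open>i\<close>-th factor \<open>X\<close> of \<open>X\<^sup>a\<^sup>i\<close> across to site \<open>0\<close>\<close>
  have "tensor_apply d n (\<lambda>k. X ^\<^sub>m a k) \<psi> ix = tensor_apply d n (\<lambda>k. X ^\<^sub>m b k * site d i X k) \<psi> ix"
    by (rule tensor_apply_cong) (simp_all add: ai b_def site_def pow_one)
  also have "\<dots> = tensor_apply d n (\<lambda>k. X ^\<^sub>m b k) (tensor_apply d n (site d i X) \<psi>) ix"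
    using X by (intro mult[symmetric]) simp_all
  also have "\<dots> = tensor_apply d n (\<lambda>k. X ^\<^sub>m b k) (tensor_apply d n (site d 0 X) \<psi>) ix"
    using indep i unfolding site_independent_def by (intro tensor_apply_cong[OF refl]) blast
  also have "\<dots> = tensor_apply d n (\<lambda>k. X ^\<^sub>m b k * site d 0 X k) \<psi> ix"
    using X by (intro mult) simp_all
  also have "\<dots> = tensor_apply d n (\<lambda>k. site d 0 X k * X ^\<^sub>m b k) \<psi> ix"
    by (rule tensor_apply_cong) (simp_all add: site_def pow_one pow_mat_Suc_left[OF X, symmetric])
  also have "\<dots> = tensor_apply d n (site d 0 X) (tensor_apply d n (\<lambda>k. X ^\<^sub>m b k) \<psi>) ix"
    using X by (intro mult[symmetric]) simp_all
  also have "\<dots> = tensor_apply d n (site d 0 X) (tensor_apply d n (site d 0 (X ^\<^sub>m s)) \<psi>) ix"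
    by (rule tensor_apply_cong) (simp_all add: sum_b Suc.hyps(1))
  also have "\<dots> = tensor_apply d n (\<lambda>k. site d 0 X k * site d 0 (X ^\<^sub>m s) k) \<psi> ix"
    using X by (intro mult) simp_all
  also have "\<dots> = tensor_apply d n (site d 0 (X ^\<^sub>m Suc s)) \<psi> ix"
    by (rule tensor_apply_cong) (simp_all add: site_def pow_one pow_mat_Suc_left[OF X, symmetric])
  finally show ?case unfolding Suc.hyps(2) .
qed

lemma mat_inv_inverse:
  assumes X: "X \<in> carrier_mat d d" and inv: "invertible_mat X"
  shows "mat_inv d X \<in> carrier_mat d d" "X * mat_inv d X = 1\<^sub>m d" "mat_inv d X * X = 1\<^sub>m d"
proof -
  obtain B where B: "inverts_mat X B" "inverts_mat B X"
    using inv unfolding invertible_mat_def by blast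
  have XB: "X * B = 1\<^sub>m d" using B(1) X unfolding inverts_mat_def by simp
  then have "dim_col B = d" by (metis index_mult_mat(3) index_one_mat(3))
  moreover have "dim_row B = d"
    using B(2) X unfolding inverts_mat_def by (metis index_mult_mat(3) index_one_mat(3) carrier_matD(2))
  ultimately have "B \<in> carrier_mat d d \<and> inverts_mat X B \<and> inverts_mat B X" using B by auto
  then have "mat_inv d X \<in> carrier_mat d d \<and> inverts_mat X (mat_inv d X) \<and> inverts_mat (mat_inv d X) X"
    unfolding mat_inv_def by (rule someI)
  then show "mat_inv d X \<in> carrier_mat d d" "X * mat_inv d X = 1\<^sub>m d" "mat_inv d X * X = 1\<^sub>m d"
    using X unfolding inverts_mat_def by auto
qed

lemma pow_mat_mult_pow_inverse:
  fixes X Y :: "'a :: semiring_1 mat"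
  assumes X: "X \<in> carrier_mat d d" and Y: "Y \<in> carrier_mat d d" and XY: "X * Y = 1\<^sub>m d"
  shows "X ^\<^sub>m j * Y ^\<^sub>m j = 1\<^sub>m d"
proof (induction j)
  case 0
  then show ?case using X Y by simp
next
  case (Suc j)
  have "X ^\<^sub>m Suc j * Y ^\<^sub>m Suc j = (X ^\<^sub>m j * X) * (Y * Y ^\<^sub>m j)"
    by (subst pow_mat_Suc_left[OF Y]) simp
  also have "\<dots> = X ^\<^sub>m j * ((X * Y) * Y ^\<^sub>m j)"
    using X Y by (simp add: assoc_mult_mat[of _ d d _ d _ d])
  also have "\<dots> = 1\<^sub>m d"
    using Suc Y by (simp add: XY)
  finally show ?case .
qed

lemma pow_mat_mult_pow_inverse_diff:
  fixes X Y :: "'a :: semiring_1 mat"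
  assumes X: "X \<in> carrier_mat d d" and Y: "Y \<in> carrier_mat d d" and XY: "X * Y = 1\<^sub>m d"
    and "j \<le> M"
  shows "X ^\<^sub>m M * Y ^\<^sub>m j = X ^\<^sub>m (M - j)"
proof -
  have "X ^\<^sub>m M * Y ^\<^sub>m j = X ^\<^sub>m (M - j) * (X ^\<^sub>m j * Y ^\<^sub>m j)"
    using X Y \<open>j \<le> M\<close> pow_mat_add[OF X, of "M - j" j] by (simp add: assoc_mult_mat[of _ d d _ d _ d])
  then show ?thesis
    using X by (simp add: pow_mat_mult_pow_inverse[OF X Y XY])
qed

lemma mat_powi_carrier_mat:
  "X \<in> carrier_mat d d \<Longrightarrow> invertible_mat X \<Longrightarrow> mat_powi d X q \<in> carrier_mat d d"
  using mat_inv_inverse unfolding mat_powi_def by auto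

lemma pow_mat_mult_mat_powi:
  assumes X: "X \<in> carrier_mat d d" and inv: "invertible_mat X" and q: "0 \<le> int M + q"
  shows "X ^\<^sub>m M * mat_powi d X q = X ^\<^sub>m nat (int M + q)"
proof (cases "0 \<le> q")
  case True
  then have "nat (int M + q) = M + nat q" by simp
  then show ?thesis using True pow_mat_add[OF X, of M "nat q"] unfolding mat_powi_def by simp
next
  case False
  then have "nat (- q) \<le> M" "nat (int M + q) = M - nat (- q)" using q by simp_all
  then show ?thesis
    using False pow_mat_mult_pow_inverse_diff[OF X mat_inv_inverse(1,2)[OF X inv]] unfolding mat_powi_def by simp
qed

lemma tensor_apply_pow_cancel:
  assumes X: "X \<in> carrier_mat d d" and inv: "invertible_mat X"
    and eq: "\<And>js. js \<in> idx d n \<Longrightarrow>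
               tensor_apply d n (\<lambda>k. X ^\<^sub>m M) \<phi> js = tensor_apply d n (\<lambda>k. X ^\<^sub>m M) \<chi> js"
    and ix: "ix \<in> idx d n"
  shows "\<phi> ix = \<chi> ix"
proof -
  let ?Y = "mat_inv d X"
  have undo: "tensor_apply d n (\<lambda>k. ?Y ^\<^sub>m M) (tensor_apply d n (\<lambda>k. X ^\<^sub>m M) f) ix = f ix" for f
  proof -
    have "tensor_apply d n (\<lambda>k. ?Y ^\<^sub>m M) (tensor_apply d n (\<lambda>k. X ^\<^sub>m M) f) ix
        = tensor_apply d n (\<lambda>k. ?Y ^\<^sub>m M * X ^\<^sub>m M) f ix"
      by (rule tensor_apply_mult) (simp_all add: X mat_inv_inverse[OF X inv] ix)
    also have "\<dots> = f ix"
      using tensor_apply_one[OF ix]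
      by (simp add: pow_mat_mult_pow_inverse[OF mat_inv_inverse(1)[OF X inv] X mat_inv_inverse(3)[OF X inv]])
    finally show ?thesis .
  qed
  have "\<phi> ix = tensor_apply d n (\<lambda>k. ?Y ^\<^sub>m M) (tensor_apply d n (\<lambda>k. X ^\<^sub>m M) \<phi>) ix"
    by (rule undo[symmetric])
  also have "\<dots> = tensor_apply d n (\<lambda>k. ?Y ^\<^sub>m M) (tensor_apply d n (\<lambda>k. X ^\<^sub>m M) \<chi>) ix"
    by (rule tensor_apply_cong) (simp_all add: eq)
  also have "\<dots> = \<chi> ix"
    by (rule undo)
  finally show ?thesis .
qed

lemma sum_nat_shift:
  assumes "\<And>k. k < n \<Longrightarrow> 0 \<le> int M + q k"
  shows "int (\<Sum>k<n. nat (int M + q k)) = int n * int M + (\<Sum>k<n. q k)"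
proof -
  have "int (\<Sum>k<n. nat (int M + q k)) = (\<Sum>k<n. int M + q k)"
    unfolding of_nat_sum using assms by (intro sum.cong) auto
  then show ?thesis by (simp add: sum.distrib)
qed

lemma tensor_apply_powi_eq_if_sum_eq:
  assumes X: "X \<in> carrier_mat d d" and inv: "invertible_mat X"
    and indep: "site_independent d n X \<psi>"
    and sum_eq: "(\<Sum>k<n. p k) = (\<Sum>k<n. q k)"
    and ix: "ix \<in> idx d n"
  shows "tensor_apply d n (\<lambda>k. mat_powi d X (p k)) \<psi> ix = tensor_apply d n (\<lambda>k. mat_powi d X (q k)) \<psi> ix"
proof -
  define M where "M = (\<Sum>k<n. nat \<bar>p k\<bar> + nat \<bar>q k\<bar>)"
  have "nat \<bar>p k\<bar> + nat \<bar>q k\<bar> \<le> M" if "k < n" for k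
    unfolding M_def using that by (intro member_le_sum) auto
  then have bound: "0 \<le> int M + p k" "0 \<le> int M + q k" if "k < n" for k
    using that by fastforce+
  \<comment> \<open>multiplying every site by \<open>X\<^sup>M\<close> makes all exponents nonnegative\<close>
  have shift: "tensor_apply d n (\<lambda>k. X ^\<^sub>m M) (tensor_apply d n (\<lambda>k. mat_powi d X (r k)) \<psi>) js
      = tensor_apply d n (site d 0 (X ^\<^sub>m (\<Sum>k<n. nat (int M + r k)))) \<psi> js"
    if r: "\<And>k. k < n \<Longrightarrow> 0 \<le> int M + r k" and js: "js \<in> idx d n" for r js
  proof -
    have "tensor_apply d n (\<lambda>k. X ^\<^sub>m M) (tensor_apply d n (\<lambda>k. mat_powi d X (r k)) \<psi>) js
        = tensor_apply d n (\<lambda>k. X ^\<^sub>m M * mat_powi d X (r k)) \<psi> js"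
      by (rule tensor_apply_mult) (simp_all add: X inv mat_powi_carrier_mat js)
    also have "\<dots> = tensor_apply d n (\<lambda>k. X ^\<^sub>m nat (int M + r k)) \<psi> js"
      by (rule tensor_apply_cong) (simp_all add: pow_mat_mult_mat_powi[OF X inv] r)
    also have "\<dots> = tensor_apply d n (site d 0 (X ^\<^sub>m (\<Sum>k<n. nat (int M + r k)))) \<psi> js"
      by (rule tensor_apply_pow_eq_first_site[OF X indep js])
    finally show ?thesis .
  qed
  have "int (\<Sum>k<n. nat (int M + p k)) = int (\<Sum>k<n. nat (int M + q k))"
    using sum_nat_shift[of n M p, OF bound(1)] sum_nat_shift[of n M q, OF bound(2)] sum_eq by linarith
  then have exps_eq: "(\<Sum>k<n. nat (int M + p k)) = (\<Sum>k<n. nat (int M + q k))"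
    by (simp only: of_nat_eq_iff)
  have "tensor_apply d n (\<lambda>k. X ^\<^sub>m M) (tensor_apply d n (\<lambda>k. mat_powi d X (p k)) \<psi>) js
      = tensor_apply d n (\<lambda>k. X ^\<^sub>m M) (tensor_apply d n (\<lambda>k. mat_powi d X (q k)) \<psi>) js"
    if js: "js \<in> idx d n" for js
    by (simp only: shift[OF bound(1) js] shift[OF bound(2) js] exps_eq)
  then show ?thesis by (rule tensor_apply_pow_cancel[OF X inv _ ix])
qed

theorem corollary1:
  fixes d n :: nat and X :: "complex mat" and \<psi> :: "nat list \<Rightarrow> complex"
  assumes "n \<ge> 2"
    and "X \<in> carrier_mat d d"
    and "perm_symmetric d n \<psi>"
    and "perm_symmetric d n (tensor_apply d n (first_site d X) \<psi>)"
  shows "(\<forall>ps :: nat \<Rightarrow> nat. \<forall>is\<in>idx d n.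
            tensor_apply d n (first_site d (X ^\<^sub>m (\<Sum>k<n. ps k))) \<psi> is
          = tensor_apply d n (\<lambda>k. X ^\<^sub>m ps k) \<psi> is)
       \<and> (invertible_mat X \<longrightarrow>
          (\<forall>ps :: nat \<Rightarrow> int. \<forall>is\<in>idx d n.
            tensor_apply d n (first_site d (mat_powi d X (\<Sum>k<n. ps k))) \<psi> is
          = tensor_apply d n (\<lambda>k. mat_powi d X (ps k)) \<psi> is))"
proof -
  note X = assms(2)
  have indep: "site_independent d n X \<psi>"
    using assms(3,4) unfolding first_site_eq_site by (rule perm_symmetric_imp_site_independent)
  have nat_exponents: "tensor_apply d n (first_site d (X ^\<^sub>m (\<Sum>k<n. ps k))) \<psi> ix
      = tensor_apply d n (\<lambda>k. X ^\<^sub>m ps k) \<psi> ix" if ix: "ix \<in> idx d n" for ps ix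
    unfolding first_site_eq_site by (rule tensor_apply_pow_eq_first_site[OF X indep ix, symmetric])
  have int_exponents: "tensor_apply d n (first_site d (mat_powi d X (\<Sum>k<n. ps k))) \<psi> ix
      = tensor_apply d n (\<lambda>k. mat_powi d X (ps k)) \<psi> ix"
    if inv: "invertible_mat X" and ix: "ix \<in> idx d n" for ps ix
  proof -
    let ?p = "\<Sum>k<n. ps k"
    have "tensor_apply d n (first_site d (mat_powi d X ?p)) \<psi> ix
        = tensor_apply d n (\<lambda>k. mat_powi d X (if k = 0 then ?p else 0)) \<psi> ix"
      using X by (intro tensor_apply_cong) (simp_all add: first_site_def mat_powi_def)
    also have "\<dots> = tensor_apply d n (\<lambda>k. mat_powi d X (ps k)) \<psi> ix"
      using assms(1) by (intro tensor_apply_powi_eq_if_sum_eq[OF X inv indep _ ix]) simp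
    finally show ?thesis .
  qed
  show ?thesis
    using nat_exponents int_exponents by blast
qed

end
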